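(* Let $k\ge4$ be an integer, $\eta\in[\eta_{k+1},\eta_k)$, and $j\ge k$ an integer. Then $\angle 1z_jw_1\in(0,\pi)$.
   Context: For $\eta\in(0,\pi/3)$ let $a=\frac{e^{-i\eta}}{2\cos\eta}$, $c=\frac{1}{1-|a|^4}$, $z_j=ca^{j+1}$, $w_1=1-c|a|^2a$. For $u,v,w\in\mathbb{C}$, $\angle uvw=\arg\frac{w-v}{u-v}$ with $\arg$ taking values in $[0,2\pi)$. For integers $k\ge1$ let $\Phi_k(\eta)=(1-|a|^4)\sin((k-1)\eta)-|a|^3\sin((k-2)\eta)+|a|^k\sin\eta$; for each $k\ge4$, $\Phi_k$ has a unique zero in $(\pi/k,\pi/(k-1))$, denoted $\eta_k$. *)

theory Defs
  imports "HOL-Analysis.Analysis"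
begin

definition aa :: "real \<Rightarrow> complex" where
  "aa \<eta> = cis (- \<eta>) / complex_of_real (2 * cos \<eta>)"

definition cc :: "real \<Rightarrow> real" where
  "cc \<eta> = 1 / (1 - cmod (aa \<eta>) ^ 4)"

definition zz :: "real \<Rightarrow> nat \<Rightarrow> complex" where
  "zz \<eta> j = complex_of_real (cc \<eta>) * aa \<eta> ^ (j + 1)"

definition w1 :: "real \<Rightarrow> complex" where
  "w1 \<eta> = 1 - complex_of_real (cc \<eta> * cmod (aa \<eta>) ^ 2) * aa \<eta>"

definition arg2pi :: "complex \<Rightarrow> real" where
  "arg2pi z = (if Arg z < 0 then Arg z + 2 * pi else Arg z)"

definition angle3 :: "complex \<Rightarrow> complex \<Rightarrow> complex \<Rightarrow> real" where
  "angle3 u v w = arg2pi ((w - v) / (u - v))"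

definition Phi :: "nat \<Rightarrow> real \<Rightarrow> real" where
  "Phi k \<eta> = (1 - cmod (aa \<eta>) ^ 4) * sin ((real k - 1) * \<eta>)
              - cmod (aa \<eta>) ^ 3 * sin ((real k - 2) * \<eta>)
              + cmod (aa \<eta>) ^ k * sin \<eta>"

definition eta_k :: "nat \<Rightarrow> real" where
  "eta_k k = (THE \<eta>. \<eta> \<in> {pi / real k <..< pi / (real k - 1)} \<and> Phi k \<eta> = 0)"

end

(*
  Write a = r e^(-i eta) with r = 1 / (2 cos eta), and c = 1 / (1 - r^4).  Then
  Im ((w_1 - z_j) * cnj (1 - z_j)) = c r^3 (sin eta + c r^(j+1) sin (j eta)),
  so the angle lies in (0, pi) iff the bracket is positive.  The bracket is positive
  for all j >= 4 as soon as r^4 < 1/2, i.e. cos^4 eta > 1/8: for eta <= pi/4 because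
  |sin (j eta)| <= j sin eta and c r^(j+1) j < 1; for eta > pi/4 and j >= 5 because
  sin eta > 1/sqrt 2 > c r^(j+1); and for j = 4 by an explicit identity in cos eta.

  The hypothesis eta < eta_k gives cos^4 eta > 1/8: eta_4 is the angle in (pi/4, pi/3)
  with cos^4 eta_4 = 1/8, and eta_k < pi/(k-1) <= pi/4 for k >= 5.  Both facts need
  eta_k to be the unique zero of Phi_k in (pi/k, pi/(k-1)): it exists by the
  intermediate value theorem; it is unique for k = 5 because Phi_5 is sin eta times a
  polynomial in cos^2 eta that is monotone there, and for k >= 6 because Phi_k is
  strictly decreasing.
*)
theory Submission
  imports Defs
begin

lemma pi_div_antimono: "0 < a \<Longrightarrow> a \<le> b \<Longrightarrow> pi / b \<le> pi / a"
  by (intro divide_left_mono) auto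

lemma cos_gt_half: "0 \<le> e \<Longrightarrow> e < pi / 3 \<Longrightarrow> 1 / 2 < cos e"
  using cos_monotone_0_pi[of e "pi / 3"] by (simp add: cos_60)

lemma cos_gt_half_if_pow4_gt:
  fixes e :: real
  assumes "0 < cos e" "1 / 8 < cos e ^ 4"
  shows "1 / 2 < cos e"
proof (rule power_less_imp_less_base[of _ 4])
  show "(1 / 2) ^ 4 < cos e ^ 4"
    using assms(2) by (simp add: power_divide)
qed (use assms(1) in simp)

lemma half_le_cos_sq:
  assumes "0 \<le> e" "e \<le> pi / 4"
  shows "1 / 2 \<le> (cos e)\<^sup>2"
proof -
  have "sqrt 2 / 2 \<le> cos e"
    using cos_monotone_0_pi_le[of e "pi / 4"] assms by (simp add: cos_45)
  then have "(sqrt 2 / 2)\<^sup>2 \<le> (cos e)\<^sup>2"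
    by (intro power_mono) auto
  then show ?thesis
    by (simp add: power_divide)
qed

lemma cos_ge_one_minus_sq_half: "1 - x\<^sup>2 / 2 \<le> cos (x :: real)"
proof -
  have "cos x = 1 - 2 * (sin (x / 2))\<^sup>2"
    using cos_double_sin[of "x / 2"] by simp
  moreover have "(sin (x / 2))\<^sup>2 \<le> (x / 2)\<^sup>2"
    using abs_sin_x_le_abs_x[of "x / 2"] by (metis abs_le_square_iff)
  ultimately show ?thesis
    by (simp add: power_divide)
qed

lemma cos_gt_four_fifths:
  assumes "0 \<le> x" "x < pi / 5"
  shows "4 / 5 < cos x"
proof -
  have "x < 63 / 100"
    using assms pi_approx by simp
  then have "x\<^sup>2 < (63 / 100)\<^sup>2"
    using assms by (intro power_strict_mono) auto
  then show ?thesis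
    using cos_ge_one_minus_sq_half[of x] by (simp add: power_divide)
qed

lemma abs_sin_nat_mult_le: "\<bar>sin (real n * x)\<bar> \<le> real n * \<bar>sin x\<bar>"
proof (induction n)
  case 0
  then show ?case by simp
next
  case (Suc n)
  have "sin (real (Suc n) * x) = sin (real n * x) * cos x + cos (real n * x) * sin x"
    by (simp add: distrib_right sin_add)
  also have "\<bar>\<dots>\<bar> \<le> \<bar>sin (real n * x)\<bar> * \<bar>cos x\<bar> + \<bar>cos (real n * x)\<bar> * \<bar>sin x\<bar>"
    by (metis abs_mult abs_triangle_ineq)
  also have "\<dots> \<le> \<bar>sin (real n * x)\<bar> * 1 + 1 * \<bar>sin x\<bar>"
    by (intro add_mono mult_left_mono mult_right_mono) auto
  finally show ?case
    using Suc by (simp add: distrib_right)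
qed

lemma sin_three_times: "sin (3 * e :: real) = sin e * (4 * (cos e)\<^sup>2 - 1)"
proof -
  have "sin (3 * e) = sin (2 * e + e)"
    by simp
  also have "\<dots> = (2 * sin e * cos e) * cos e + (2 * (cos e)\<^sup>2 - 1) * sin e"
    by (simp only: sin_add sin_double cos_double_cos)
  finally show ?thesis
    by (simp add: power2_eq_square algebra_simps)
qed

lemma sin_four_times: "sin (4 * e :: real) = 4 * sin e * cos e * (2 * (cos e)\<^sup>2 - 1)"
proof -
  have "sin (4 * e) = sin (2 * (2 * e))"
    by simp
  also have "\<dots> = 2 * (2 * sin e * cos e) * (2 * (cos e)\<^sup>2 - 1)"
    by (simp only: sin_double cos_double_cos)
  finally show ?thesis
    by simp
qed

lemma sixteen_sq_less_nine_pow2: "4 \<le> n \<Longrightarrow> 16 * (real n)\<^sup>2 < 9 * 2 ^ (n + 1)"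
proof (induction n rule: dec_induct)
  case base
  then show ?case by simp
next
  case (step n)
  have "16 * (real (Suc n))\<^sup>2 = 16 * (real n)\<^sup>2 + 32 * real n + 16"
    by (simp add: power2_eq_square algebra_simps)
  also have "\<dots> \<le> 2 * (16 * (real n)\<^sup>2)"
  proof -
    have "4 * real n \<le> real n * real n"
      using step(1) by (intro mult_right_mono) auto
    then show ?thesis
      using step(1) unfolding power2_eq_square by linarith
  qed
  also have "\<dots> < 2 * (9 * 2 ^ (n + 1))"
    using step(3) by simp
  finally show ?case by simp
qed

lemma nat_mult_five_eighths_pow_le: "6 \<le> k \<Longrightarrow> real k * (5 / 8) ^ (k - 3) \<le> 3 / 2"
proof (induction k rule: dec_induct)
  case base
  then show ?case by (simp add: power3_eq_cube)
next
  case (step k)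
  define q :: real where "q = (5 / 8) ^ (k - 3)"
  have "q \<le> (5 / 8) ^ 3"
    unfolding q_def using step(1) by (intro power_decreasing) auto
  then have q: "0 \<le> q" "q \<le> 1 / 4"
    by (auto simp: q_def power3_eq_cube)
  have "Suc k - 3 = Suc (k - 3)"
    using step(1) by simp
  then have "real (Suc k) * (5 / 8) ^ (Suc k - 3) = (real k * q + q) * (5 / 8)"
    by (simp add: q_def algebra_simps)
  also have "\<dots> \<le> (3 / 2 + 1 / 4) * (5 / 8)"
    using step(3) q by (intro mult_right_mono add_mono) (auto simp: q_def)
  finally show ?case
    by simp
qed

lemma cube_minus_pow_strict_mono:
  fixes c t t' :: real
  assumes "3 \<le> k" "0 < t" "t < t'" "real k * t' ^ (k - 3) < 3 * c"
  shows "c * t ^ 3 - t ^ k < c * t' ^ 3 - t' ^ k"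
proof -
  have "(\<lambda>u. c * u ^ 3 - u ^ k) t < (\<lambda>u. c * u ^ 3 - u ^ k) t'"
  proof (rule DERIV_pos_imp_increasing[OF assms(3)])
    fix u assume u: "t \<le> u" "u \<le> t'"
    have "((\<lambda>u. c * u ^ 3 - u ^ k) has_real_derivative c * (3 * u\<^sup>2) - real k * u ^ (k - 1)) (at u)"
      by (auto intro!: derivative_eq_intros)
    moreover have "u ^ (k - 1) = u\<^sup>2 * u ^ (k - 3)"
    proof -
      have "k - 1 = 2 + (k - 3)"
        using assms(1) by simp
      then show ?thesis
        by (simp add: power_add power2_eq_square)
    qed
    moreover have "0 < c * (3 * u\<^sup>2) - real k * (u\<^sup>2 * u ^ (k - 3))"
    proof -
      have "real k * u ^ (k - 3) \<le> real k * t' ^ (k - 3)"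
        using u assms by (intro mult_left_mono power_mono) auto
      then have "real k * u ^ (k - 3) < 3 * c"
        using assms(4) by linarith
      then have "0 < u\<^sup>2 * (3 * c - real k * u ^ (k - 3))"
        using u assms(2) by (intro mult_pos_pos) auto
      then show ?thesis
        by (simp add: algebra_simps)
    qed
    ultimately show "\<exists>d. ((\<lambda>u. c * u ^ 3 - u ^ k) has_real_derivative d) (at u) \<and> 0 < d"
      by auto
  qed
  then show ?thesis
    by simp
qed

lemma cube_mult_minus_pow_pos_strict_mono:
  fixes r r' c c' :: real
  assumes "6 \<le> k" "0 < r" "r < r'" "r' \<le> 5 / 8" "4 / 5 < c" "c \<le> c'"
  shows "0 < r ^ 3 * c - r ^ k" "r ^ 3 * c - r ^ k < r' ^ 3 * c' - r' ^ k"
proof -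
  have "r ^ 3 \<le> (5 / 8) ^ 3"
    using assms by (intro power_mono) auto
  then have "r ^ 3 < c"
    using assms(5) by (simp add: power3_eq_cube)
  then have "r ^ 3 * r ^ 3 < r ^ 3 * c"
    using assms(2) by (intro mult_strict_left_mono) auto
  moreover have "r ^ k \<le> r ^ 3 * r ^ 3"
    using assms power_decreasing[of 6 k r] by (simp flip: power_add)
  ultimately show "0 < r ^ 3 * c - r ^ k"
    by linarith
  have "real k * r' ^ (k - 3) \<le> real k * (5 / 8) ^ (k - 3)"
    using assms by (intro mult_left_mono power_mono) auto
  also have "\<dots> < 3 * c"
    using nat_mult_five_eighths_pow_le[OF assms(1)] assms(5) by simp
  finally have "c * r ^ 3 - r ^ k < c * r' ^ 3 - r' ^ k"
    using assms by (intro cube_minus_pow_strict_mono) auto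
  also have "\<dots> \<le> c' * r' ^ 3 - r' ^ k"
    using assms by (simp add: mult_right_mono)
  finally show "r ^ 3 * c - r ^ k < r' ^ 3 * c' - r' ^ k"
    by (simp add: mult.commute)
qed

section \<open>The angle at z_j\<close>

lemma norm_aa: "cmod (aa e) = 1 / (2 * \<bar>cos e\<bar>)"
  by (simp add: aa_def norm_divide)

lemma norm_aa_mult_cos: "0 < cos e \<Longrightarrow> 2 * cos e * cmod (aa e) = 1"
  by (simp add: norm_aa)

lemma norm_aa_bounds: "1 / 2 < cos e \<Longrightarrow> 0 < cmod (aa e) \<and> cmod (aa e) < 1"
  by (simp add: norm_aa field_simps)

lemma norm_aa_sq_le_half:
  assumes "0 \<le> e" "e \<le> pi / 4"
  shows "cmod (aa e) ^ 2 \<le> 1 / 2"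
proof -
  have "1 / 2 \<le> (cos e)\<^sup>2"
    using half_le_cos_sq[OF assms] .
  moreover from this have "0 < (cos e)\<^sup>2"
    by linarith
  ultimately show ?thesis
    by (simp add: norm_aa field_simps)
qed

lemma cc_pos: "1 / 2 < cos e \<Longrightarrow> 0 < cc e"
  using norm_aa_bounds[of e] by (simp add: cc_def power_less_one_iff)

lemma cnj_aa_eq_rcis:
  assumes "0 < cos e"
  shows "cnj (aa e) = rcis (cmod (aa e)) e"
proof -
  have "cnj (aa e) = cis e / of_real (2 * cos e)"
    by (simp add: aa_def cis_cnj)
  also have "\<dots> = rcis (cmod (aa e)) e"
    using assms by (simp add: norm_aa rcis_def)
  finally show ?thesis .
qed

lemma arg2pi_in_0_pi_iff: "arg2pi z \<in> {0<..<pi} \<longleftrightarrow> 0 < Im z"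
proof -
  have "arg2pi z \<in> {0<..<pi} \<longleftrightarrow> 0 < Arg z \<and> Arg z < pi"
    using Arg_bounded[of z] by (auto simp: arg2pi_def)
  then show ?thesis
    using Arg_lt_pi by blast
qed

lemma angle3_in_0_pi_iff: "angle3 u v w \<in> {0<..<pi} \<longleftrightarrow> 0 < Im ((w - v) * cnj (u - v))"
  unfolding angle3_def arg2pi_in_0_pi_iff by (rule Im_complex_div_gt_0)

lemma Im_one_minus_pow_mult_cnj:
  fixes a :: complex and c :: real and j :: nat
  defines "z \<equiv> of_real c * a ^ (j + 1)"
  shows "Im ((1 - of_real (c * cmod a ^ 2) * a - z) * cnj (1 - z))
    = c * cmod a ^ 2 * (Im (cnj a) + c * cmod a ^ 2 * Im (cnj a ^ j))"
proof -
  have "(1 - of_real (c * cmod a ^ 2) * a - z) * cnj (1 - z)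
      = (1 - z) * cnj (1 - z) - of_real (c * cmod a ^ 2) * a
        + of_real (c * cmod a ^ 2) * of_real c * (a * cnj a) * cnj a ^ j"
    by (simp add: z_def algebra_simps)
  also have "\<dots> = of_real ((cmod (1 - z))\<^sup>2) - of_real (c * cmod a ^ 2) * a
        + of_real (c * cmod a ^ 2 * c * (cmod a)\<^sup>2) * cnj a ^ j"
    by (simp only: complex_norm_square[symmetric] of_real_mult)
  finally show ?thesis
    by (simp add: algebra_simps)
qed

lemma Im_w1_zz:
  assumes "0 < cos e"
  shows "Im ((w1 e - zz e j) * cnj (1 - zz e j))
    = cc e * cmod (aa e) ^ 3 * (sin e + cc e * cmod (aa e) ^ (j + 1) * sin (real j * e))"
proof -
  have "Im ((w1 e - zz e j) * cnj (1 - zz e j))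
      = cc e * cmod (aa e) ^ 2 * (Im (cnj (aa e)) + cc e * cmod (aa e) ^ 2 * Im (cnj (aa e) ^ j))"
    unfolding w1_def zz_def by (rule Im_one_minus_pow_mult_cnj)
  also have "\<dots> = cc e * cmod (aa e) ^ 3 * (sin e + cc e * cmod (aa e) ^ (j + 1) * sin (real j * e))"
    using assms by (simp add: cnj_aa_eq_rcis DeMoivre2 algebra_simps power2_eq_square power3_eq_cube)
  finally show ?thesis .
qed

lemma weighted_sin_sum_pos_4:
  assumes "0 < e" "e < pi / 2" "1 / 8 < cos e ^ 4"
  shows "0 < sin e + cc e * cmod (aa e) ^ 5 * sin (4 * e)"
proof -
  define x where "x = cos e"
  have x: "1 / 2 < x" "2 < 16 * x ^ 4"
    using assms cos_gt_half_if_pow4_gt[of e] cos_gt_zero[of e] by (simp_all add: x_def)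
  then have "(1 / 2)\<^sup>2 < x\<^sup>2"
    by (intro power_strict_mono) auto
  have s: "0 < sin e"
    using assms by (intro sin_gt_zero) auto
  have cc: "cc e = 16 * x ^ 4 / (16 * x ^ 4 - 1)"
    using x by (simp add: cc_def norm_aa x_def[symmetric] field_simps)
  have "sin e + cc e * cmod (aa e) ^ 5 * sin (4 * e)
      = sin e + 16 * x ^ 4 / (16 * x ^ 4 - 1) * (1 / (2 * x)) ^ 5 * (4 * sin e * x * (2 * x\<^sup>2 - 1))"
    using x by (simp add: cc norm_aa sin_four_times x_def[symmetric])
  also have "\<dots> = sin e * ((16 * x ^ 4 + 4 * x\<^sup>2 - 3) / (16 * x ^ 4 - 1))"
    using x by (simp add: field_simps eval_nat_numeral)
  also have "0 < \<dots>"
    using x s \<open>(1 / 2)\<^sup>2 < x\<^sup>2\<close> by (intro mult_pos_pos divide_pos_pos) (auto simp: power_divide)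
  finally show ?thesis .
qed

lemma weighted_sin_sum_pos_small_angle:
  assumes "0 < e" "e \<le> pi / 4" "4 \<le> j"
  shows "0 < sin e + cc e * cmod (aa e) ^ (j + 1) * sin (real j * e)"
proof -
  define r where "r = cmod (aa e)"
  define m where "m = cc e * r ^ (j + 1)"
  have r: "0 < r" "r\<^sup>2 \<le> 1 / 2"
    using norm_aa_sq_le_half[of e] assms cos_gt_zero[of e] by (auto simp: r_def norm_aa)
  then have "r ^ 4 \<le> 1 / 4"
    using power_mono[of "r\<^sup>2" "1 / 2" 2] by (simp add: power_divide flip: power_mult)
  then have c: "0 < cc e" "cc e \<le> 4 / 3"
    by (auto simp: cc_def r_def[symmetric] field_simps)
  have "(m * real j)\<^sup>2 = (cc e)\<^sup>2 * (r\<^sup>2) ^ (j + 1) * (real j)\<^sup>2"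
    by (simp add: m_def power_mult_distrib power_mult[symmetric] mult.commute)
  also have "\<dots> \<le> (4 / 3)\<^sup>2 * (1 / 2) ^ (j + 1) * (real j)\<^sup>2"
    using c r by (intro mult_mono power_mono) auto
  also have "\<dots> < 1"
    using sixteen_sq_less_nine_pow2[OF assms(3)] by (simp add: field_simps)
  finally have mj: "m * real j < 1"
    using power_less_imp_less_base[of "m * real j" 2 1] by simp
  have s: "0 < sin e"
    using assms by (intro sin_gt_zero) auto
  have "\<bar>m * sin (real j * e)\<bar> \<le> m * (real j * sin e)"
    using abs_sin_nat_mult_le[of j e] s c r by (simp add: m_def abs_mult)
  also have "\<dots> < sin e"
    using mj s by (simp add: mult.assoc[symmetric])
  finally show ?thesis
    by (simp add: m_def r_def abs_less_iff)
qed

lemma weighted_sin_sum_pos_large_angle: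
  assumes "pi / 4 \<le> e" "e < pi / 2" "1 / 8 < cos e ^ 4" "5 \<le> j"
  shows "0 < sin e + cc e * cmod (aa e) ^ (j + 1) * sin (real j * e)"
proof -
  define r where "r = cmod (aa e)"
  define m where "m = cc e * r ^ (j + 1)"
  have x: "1 / 2 < cos e"
    using assms cos_gt_half_if_pow4_gt[of e] cos_gt_zero[of e] by simp
  have "cos e \<le> sqrt 2 / 2"
    using cos_monotone_0_pi_le[of "pi / 4" e] assms by (simp add: cos_45)
  then have "(cos e)\<^sup>2 \<le> 1 / 2"
    using power_mono[of "cos e" "sqrt 2 / 2" 2] x by (simp add: power_divide)
  then have s2: "1 / 2 \<le> (sin e)\<^sup>2"
    by (simp add: sin_squared_eq)
  have s: "0 < sin e"
    using assms by (intro sin_gt_zero) auto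
  have r: "0 < r" "r < 1"
    using norm_aa_bounds[OF x] by (simp_all add: r_def)
  have r4: "r ^ 4 < 1 / 2"
    using assms(3) x by (simp add: r_def norm_aa field_simps)
  then have c: "0 < cc e" "cc e < 2"
    by (auto simp: cc_def r_def[symmetric] field_simps)
  have "m \<le> cc e * r ^ 6"
    unfolding m_def using c r assms(4) by (intro mult_left_mono power_decreasing) auto
  also have "\<dots> < 2 * r ^ 6"
    using c r by simp
  also have "\<dots> < sin e"
  proof (rule power_less_imp_less_base[of _ 2])
    have "(2 * r ^ 6)\<^sup>2 = 4 * (r ^ 4) ^ 3"
      by (simp add: power_mult_distrib flip: power_mult)
    also have "\<dots> < 4 * (1 / 2) ^ 3"
      using r r4 by (intro mult_strict_left_mono power_strict_mono) auto
    also have "\<dots> \<le> (sin e)\<^sup>2"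
      using s2 by (simp add: power_divide)
    finally show "(2 * r ^ 6)\<^sup>2 < (sin e)\<^sup>2" .
  qed (use s in simp)
  finally have "m < sin e" .
  moreover have "\<bar>m * sin (real j * e)\<bar> \<le> m"
    using c r by (simp add: m_def abs_mult mult_left_le)
  ultimately have "\<bar>m * sin (real j * e)\<bar> < sin e"
    by linarith
  then show ?thesis
    by (simp add: m_def r_def abs_less_iff)
qed

lemma weighted_sin_sum_pos:
  assumes "0 < e" "e < pi / 2" "1 / 8 < cos e ^ 4" "4 \<le> j"
  shows "0 < sin e + cc e * cmod (aa e) ^ (j + 1) * sin (real j * e)"
proof -
  consider "e \<le> pi / 4" | "pi / 4 \<le> e" "j = 4" | "pi / 4 \<le> e" "5 \<le> j"
    using assms(4) by linarith
  then show ?thesis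
  proof cases
    case 2
    then show ?thesis
      using weighted_sin_sum_pos_4[OF assms(1-3)] by simp
  qed (use assms weighted_sin_sum_pos_small_angle weighted_sin_sum_pos_large_angle in auto)
qed

lemma angle3_1_zz_w1_in_0_pi:
  assumes "0 < e" "e < pi / 2" "1 / 8 < cos e ^ 4" "4 \<le> j"
  shows "angle3 1 (zz e j) (w1 e) \<in> {0<..<pi}"
proof -
  have x: "1 / 2 < cos e"
    using assms cos_gt_half_if_pow4_gt[of e] cos_gt_zero[of e] by simp
  have "0 < cc e * cmod (aa e) ^ 3 * (sin e + cc e * cmod (aa e) ^ (j + 1) * sin (real j * e))"
    using weighted_sin_sum_pos[OF assms] norm_aa_bounds[OF x] cc_pos[OF x] by simp
  moreover have "0 < cos e"
    using x by simp
  ultimately show ?thesis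
    unfolding angle3_in_0_pi_iff by (simp only: Im_w1_zz)
qed

section \<open>The zeros of Phi_k\<close>

lemma isCont_Phi: "cos e \<noteq> 0 \<Longrightarrow> isCont (Phi k) e"
  unfolding Phi_def[abs_def] norm_aa by (intro continuous_intros) auto

lemma Phi_pos_at_pi_div:
  assumes "4 \<le> k"
  shows "0 < Phi k (pi / real k)"
proof -
  define e where "e = pi / real k"
  define r where "r = cmod (aa e)"
  have e: "0 < e" "e \<le> pi / 4"
    using assms pi_div_antimono[of 4 "real k"] by (auto simp: e_def)
  have cos: "0 < cos e"
    using e by (intro cos_gt_zero) auto
  have r: "0 < r" "r ^ 2 \<le> 1 / 2"
    using norm_aa_sq_le_half[of e] e cos by (simp_all add: r_def norm_aa)
  then have "r ^ 4 \<le> 1 / 4"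
    using power_mono[of "r\<^sup>2" "1 / 2" 2] by (simp add: power_divide flip: power_mult)
  have "(real k - 1) * e = pi - e" "(real k - 2) * e = pi - 2 * e"
    using assms by (simp_all add: e_def field_simps)
  then have "sin ((real k - 1) * e) = sin e" "sin ((real k - 2) * e) = 2 * sin e * cos e"
    by (simp_all only: sin_pi_minus sin_double)
  then have "Phi k e = sin e * (1 - r ^ 4 - r ^ 2 * (2 * cos e * r) + r ^ k)"
    unfolding Phi_def r_def[symmetric] by (simp add: algebra_simps power2_eq_square power3_eq_cube)
  also have "\<dots> = sin e * (1 - r ^ 4 - r ^ 2 + r ^ k)"
    using cos by (simp add: r_def norm_aa_mult_cos)
  also have "0 < \<dots>"
    using e r \<open>r ^ 4 \<le> 1 / 4\<close> by (intro mult_pos_pos sin_gt_zero) (auto simp: add_pos_nonneg)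
  finally show ?thesis
    by (simp add: e_def)
qed

lemma Phi_neg_at_pi_div_pred:
  assumes "5 \<le> k"
  shows "Phi k (pi / (real k - 1)) < 0"
proof -
  define e where "e = pi / (real k - 1)"
  define r where "r = cmod (aa e)"
  have e: "0 < e" "e \<le> pi / 4"
    using assms pi_div_antimono[of 4 "real k - 1"] by (auto simp: e_def)
  have r: "0 < r" "r < 1"
    using norm_aa_bounds[of e] cos_gt_half[of e] e by (simp_all add: r_def)
  have "(real k - 1) * e = pi" "(real k - 2) * e = pi - e"
    using assms by (simp_all add: e_def field_simps)
  then have "Phi k e = sin e * (r ^ k - r ^ 3)"
    by (simp add: Phi_def r_def[symmetric] algebra_simps)
  also have "\<dots> < 0"
    using e r assms by (intro mult_pos_neg sin_gt_zero power_strict_decreasing) auto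
  finally show ?thesis
    by (simp add: e_def)
qed

lemma Phi_has_zero:
  assumes "5 \<le> k"
  shows "\<exists>e \<in> {pi / real k<..<pi / (real k - 1)}. Phi k e = 0"
proof -
  have ab: "pi / real k \<le> pi / (real k - 1)" "pi / (real k - 1) \<le> pi / 4" "0 < pi / real k"
    using assms pi_div_antimono[of "real k - 1" "real k"] pi_div_antimono[of 4 "real k - 1"] by auto
  have "isCont (Phi k) x" if "pi / real k \<le> x" "x \<le> pi / (real k - 1)" for x
  proof (rule isCont_Phi)
    have "0 < x" "x < pi / 2"
      using that ab pi_gt_zero by linarith+
    then show "cos x \<noteq> 0"
      using cos_gt_zero by force
  qed
  then obtain e where "pi / real k \<le> e" "e \<le> pi / (real k - 1)" "Phi k e = 0"
    using IVT2[of "Phi k" "pi / (real k - 1)" 0 "pi / real k"] ab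
      Phi_pos_at_pi_div[of k] Phi_neg_at_pi_div_pred[OF assms] assms by auto
  moreover have "e \<noteq> pi / real k" "e \<noteq> pi / (real k - 1)"
    using \<open>Phi k e = 0\<close> Phi_pos_at_pi_div[of k] Phi_neg_at_pi_div_pred[OF assms] assms by auto
  ultimately show ?thesis
    by auto
qed

lemma Phi_4_factor:
  assumes "0 < cos e"
  shows "Phi 4 e * (16 * cos e ^ 4) = sin e * (4 * (cos e)\<^sup>2 - 1) * (16 * cos e ^ 4 - 2)"
proof -
  define x where "x = cos e"
  have "Phi 4 e = (1 - (1 / (2 * x)) ^ 4) * (sin e * (4 * x\<^sup>2 - 1))
      - (1 / (2 * x)) ^ 3 * (2 * sin e * x) + (1 / (2 * x)) ^ 4 * sin e"
    using assms by (simp add: Phi_def norm_aa x_def sin_three_times sin_double)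
  then show ?thesis
    using assms by (simp add: x_def[symmetric] field_simps eval_nat_numeral)
qed

lemma Phi_4_zero_iff:
  assumes "pi / 4 < e" "e < pi / 3"
  shows "Phi 4 e = 0 \<longleftrightarrow> cos e ^ 4 = 1 / 8"
proof -
  have c: "1 / 2 < cos e"
    using assms cos_gt_half[of e] by simp
  then have "(1 / 2)\<^sup>2 < (cos e)\<^sup>2"
    by (intro power_strict_mono) auto
  moreover have "0 < sin e"
    using assms by (intro sin_gt_zero) auto
  ultimately have nz: "sin e * (4 * (cos e)\<^sup>2 - 1) \<noteq> 0"
    by (simp add: power_divide)
  from c have "Phi 4 e = 0 \<longleftrightarrow> Phi 4 e * (16 * cos e ^ 4) = 0"
    by simp
  also have "\<dots> \<longleftrightarrow> 16 * cos e ^ 4 - 2 = 0"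
    using Phi_4_factor[of e] c nz by simp
  also have "\<dots> \<longleftrightarrow> cos e ^ 4 = 1 / 8"
    by auto
  finally show ?thesis .
qed

lemma Phi_4_unique_zero: "\<exists>!e. e \<in> {pi / 4<..<pi / 3} \<and> Phi 4 e = 0"
proof -
  have "cos (pi / 4) ^ 4 = ((sqrt 2 / 2)\<^sup>2)\<^sup>2"
    by (simp add: cos_45)
  then have endpoints: "cos (pi / 3) ^ 4 = 1 / 16" "cos (pi / 4) ^ 4 = 1 / 4"
    by (simp_all add: cos_60 power_divide)
  have "isCont (\<lambda>e. cos e ^ 4) x" for x :: real
    by (intro continuous_intros)
  then obtain e where "pi / 4 \<le> e" "e \<le> pi / 3" "cos e ^ 4 = 1 / 8"
    using IVT2[of "\<lambda>e. cos e ^ 4" "pi / 3" "1 / 8" "pi / 4"] endpoints by auto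
  moreover have "cos (pi / 4) ^ 4 \<noteq> 1 / 8" "cos (pi / 3) ^ 4 \<noteq> 1 / 8"
    using endpoints by simp_all
  then have "e \<noteq> pi / 4" "e \<noteq> pi / 3"
    using \<open>cos e ^ 4 = 1 / 8\<close> by metis+
  ultimately have ex: "e \<in> {pi / 4<..<pi / 3} \<and> Phi 4 e = 0"
    using Phi_4_zero_iff by auto
  have "e' = e" if "e' \<in> {pi / 4<..<pi / 3}" "Phi 4 e' = 0" for e'
  proof -
    have "cos e' ^ 4 = cos e ^ 4" "0 < cos e'" "0 < cos e"
      using that ex Phi_4_zero_iff by (auto intro!: cos_gt_zero)
    then have "cos e' = cos e"
      using power_eq_imp_eq_base by fastforce
    then show ?thesis
      using that ex cos_inj_pi[of e' e] by auto
  qed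
  then show ?thesis
    using ex by blast
qed

definition phi5_poly :: "real \<Rightarrow> real" where
  "phi5_poly y = 256 * y ^ 4 - 128 * y ^ 3 - 32 * y\<^sup>2 + 12 * y + 1"

lemma Phi_5_factor:
  assumes "0 < cos e"
  shows "Phi 5 e * (32 * cos e ^ 5) = sin e * phi5_poly ((cos e)\<^sup>2)"
proof -
  define x where "x = cos e"
  have Phi5: "Phi 5 e = (1 - (1 / (2 * x)) ^ 4) * (4 * sin e * x * (2 * x\<^sup>2 - 1))
      - (1 / (2 * x)) ^ 3 * (sin e * (4 * x\<^sup>2 - 1)) + (1 / (2 * x)) ^ 5 * sin e"
    using assms by (simp add: Phi_def norm_aa x_def sin_three_times sin_four_times)
  have "Phi 5 e * (32 * x ^ 5) = (32 * x ^ 5 - 2 * x) * (4 * sin e * x * (2 * x\<^sup>2 - 1))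
      - 4 * x\<^sup>2 * (sin e * (4 * x\<^sup>2 - 1)) + sin e"
    using assms unfolding Phi5 by (simp add: x_def[symmetric] field_simps eval_nat_numeral)
  also have "\<dots> = sin e * phi5_poly (x\<^sup>2)"
    by (simp add: phi5_poly_def algebra_simps eval_nat_numeral)
  finally show ?thesis
    by (simp add: x_def)
qed

lemma phi5_poly_strict_mono:
  assumes "1 / 2 \<le> y" "y < y'"
  shows "phi5_poly y < phi5_poly y'"
proof (rule DERIV_pos_imp_increasing[OF assms(2)])
  fix t assume "y \<le> t" "t \<le> y'"
  have "(phi5_poly has_real_derivative 1024 * t ^ 3 - 384 * t\<^sup>2 - 64 * t + 12) (at t)"
    unfolding phi5_poly_def[abs_def] by (auto intro!: derivative_eq_intros simp: eval_nat_numeral)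
  moreover have "1024 * t ^ 3 - 384 * t\<^sup>2 - 64 * t + 12
      = 12 + 320 * (t - 1 / 2) + 1152 * (t - 1 / 2)\<^sup>2 + 1024 * (t - 1 / 2) ^ 3"
    by (simp add: power2_eq_square power3_eq_cube algebra_simps)
  moreover have "0 < 12 + 320 * (t - 1 / 2) + 1152 * (t - 1 / 2)\<^sup>2 + 1024 * (t - 1 / 2) ^ 3"
    using assms \<open>y \<le> t\<close> by (simp add: add_pos_nonneg)
  ultimately show "\<exists>d. (phi5_poly has_real_derivative d) (at t) \<and> 0 < d"
    by auto
qed

lemma Phi_decomp:
  fixes k :: nat and e :: real
  assumes "0 < cos e"
  defines "r \<equiv> cmod (aa e)" and "\<phi> \<equiv> pi - (real k - 1) * e"
  shows "Phi k e = sin \<phi> * (1 - r ^ 4 - r\<^sup>2 / 2) - sin e * (r ^ 3 * cos \<phi> - r ^ k)"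
proof -
  have "sin ((real k - 1) * e) = sin (pi - \<phi>)"
    by (simp add: \<phi>_def)
  moreover have "sin ((real k - 2) * e) = sin (pi - (\<phi> + e))"
    by (simp add: \<phi>_def algebra_simps)
  ultimately have "Phi k e = (1 - r ^ 4) * sin \<phi> - r ^ 3 * (sin \<phi> * cos e + cos \<phi> * sin e) + r ^ k * sin e"
    by (simp only: Phi_def r_def sin_pi_minus sin_add)
  also have "\<dots> = (1 - r ^ 4) * sin \<phi> - (r ^ 3 * cos e) * sin \<phi> - r ^ 3 * cos \<phi> * sin e + r ^ k * sin e"
    by (simp add: algebra_simps)
  also have "r ^ 3 * cos e = r\<^sup>2 / 2"
    using norm_aa_mult_cos[OF assms(1)] by (simp add: r_def power2_eq_square power3_eq_cube field_simps)
  finally show ?thesis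
    by (simp add: algebra_simps)
qed

lemma pi_minus_pred_mult_bounds:
  assumes "1 < k" "pi / real k < e" "e < pi / (real k - 1)"
  shows "0 < pi - (real k - 1) * e" "pi - (real k - 1) * e < pi / real k"
proof -
  have k: "0 < real k - 1"
    using assms(1) by simp
  have "(real k - 1) * e < (real k - 1) * (pi / (real k - 1))"
    using assms(3) k by (rule mult_strict_left_mono)
  then show "0 < pi - (real k - 1) * e"
    using k by simp
  have "(real k - 1) * (pi / real k) < (real k - 1) * e"
    using assms(2) k by (rule mult_strict_left_mono)
  moreover have "(real k - 1) * (pi / real k) = pi - pi / real k"
    using assms(1) by (simp add: field_simps)
  ultimately show "pi - (real k - 1) * e < pi / real k"
    by linarith
qed

lemma Phi_strict_antimono:
  assumes "6 \<le> k" "pi / real k < e" "e < e'" "e' < pi / (real k - 1)"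
  shows "Phi k e' < Phi k e"
proof -
  define r r' where "r = cmod (aa e)" and "r' = cmod (aa e')"
  define \<phi> \<phi>' where "\<phi> = pi - (real k - 1) * e" and "\<phi>' = pi - (real k - 1) * e'"
  have "0 < pi / real k" "pi / real k \<le> pi / 6" "pi / (real k - 1) \<le> pi / 5"
    using assms(1) pi_div_antimono[of 6 "real k"] pi_div_antimono[of 5 "real k - 1"] by auto
  then have e: "0 < e" "e < pi / 5" "e' < pi / 5"
    using assms by linarith+
  have cos: "4 / 5 < cos e" "4 / 5 < cos e'" "cos e' < cos e"
    using cos_gt_four_fifths[of e] cos_gt_four_fifths[of e'] cos_monotone_0_pi[of e e'] e assms(3)
    by auto
  then have r: "0 < r" "r < r'" "r' \<le> 5 / 8"
    by (auto simp: r_def r'_def norm_aa field_simps)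
  have "0 < \<phi>'" "\<phi> < pi / real k"
    using pi_minus_pred_mult_bounds[of k e'] pi_minus_pred_mult_bounds[of k e] assms
    by (simp_all add: \<phi>_def \<phi>'_def)
  moreover have "\<phi>' < \<phi>"
    using assms by (simp add: \<phi>_def \<phi>'_def)
  ultimately have \<phi>: "0 < \<phi>'" "\<phi>' < \<phi>" "\<phi> < pi / 5"
    using \<open>pi / real k \<le> pi / 6\<close> pi_gt_zero by linarith+
  have "sin \<phi>' * (1 - r' ^ 4 - r'\<^sup>2 / 2) < sin \<phi> * (1 - r ^ 4 - r\<^sup>2 / 2)"
  proof (rule mult_strict_mono')
    show "sin \<phi>' < sin \<phi>" "0 \<le> sin \<phi>'"
      using \<phi> by (auto intro!: sin_monotone_2pi sin_ge_zero)
    have "r ^ 4 < r' ^ 4" "r\<^sup>2 < r'\<^sup>2" "r' ^ 4 \<le> (5 / 8) ^ 4" "r'\<^sup>2 \<le> (5 / 8)\<^sup>2"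
      using r by (auto intro!: power_strict_mono power_mono)
    then show "1 - r' ^ 4 - r'\<^sup>2 / 2 < 1 - r ^ 4 - r\<^sup>2 / 2" "0 \<le> 1 - r' ^ 4 - r'\<^sup>2 / 2"
      by (auto simp: power_divide)
  qed
  moreover have "sin e * (r ^ 3 * cos \<phi> - r ^ k) < sin e' * (r' ^ 3 * cos \<phi>' - r' ^ k)"
  proof (rule mult_strict_mono')
    show "sin e < sin e'" "0 \<le> sin e"
      using e assms by (auto intro!: sin_monotone_2pi sin_ge_zero)
    have c: "4 / 5 < cos \<phi>" "cos \<phi> \<le> cos \<phi>'"
      using cos_gt_four_fifths[of \<phi>] cos_monotone_0_pi_le[of \<phi>' \<phi>] \<phi> by auto
    show "r ^ 3 * cos \<phi> - r ^ k < r' ^ 3 * cos \<phi>' - r' ^ k" "0 \<le> r ^ 3 * cos \<phi> - r ^ k"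
      using cube_mult_minus_pow_pos_strict_mono[OF assms(1) r c] by auto
  qed
  ultimately show ?thesis
    using Phi_decomp[of e k] Phi_decomp[of e' k] cos
    by (simp add: r_def r'_def \<phi>_def \<phi>'_def)
qed

lemma Phi_zero_unique:
  assumes "5 \<le> k"
    and "e \<in> {pi / real k<..<pi / (real k - 1)}" "Phi k e = 0"
    and "e' \<in> {pi / real k<..<pi / (real k - 1)}" "Phi k e' = 0"
  shows "e = e'"
proof -
  have "\<not> a < b"
    if ab: "a \<in> {pi / real k<..<pi / (real k - 1)}" "b \<in> {pi / real k<..<pi / (real k - 1)}"
      and zero: "Phi k a = 0" "Phi k b = 0" for a b
  proof
    assume "a < b"
    show False
    proof (cases "k = 5")
      case True
      then have ab': "0 < a" "b < pi / 4"
        using ab pi_gt_zero by auto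
      then have cos: "0 < cos a" "0 < cos b" "cos b < cos a"
        using \<open>a < b\<close> by (auto intro!: cos_gt_zero cos_monotone_0_pi)
      have "phi5_poly ((cos a)\<^sup>2) = 0" "phi5_poly ((cos b)\<^sup>2) = 0"
        using Phi_5_factor[of a] Phi_5_factor[of b] zero cos ab' \<open>a < b\<close> True
          sin_gt_zero[of a] sin_gt_zero[of b] by auto
      moreover have "1 / 2 \<le> (cos b)\<^sup>2"
        using half_le_cos_sq[of b] ab' \<open>a < b\<close> by simp
      moreover have "(cos b)\<^sup>2 < (cos a)\<^sup>2"
        using cos by (intro power_strict_mono) auto
      ultimately show False
        using phi5_poly_strict_mono by fastforce
    next
      case False
      then show False
        using Phi_strict_antimono[of k a b] assms(1) ab zero \<open>a < b\<close> by auto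
    qed
  qed
  then show ?thesis
    using assms by (meson linorder_neqE)
qed

lemma Phi_unique_zero:
  assumes "4 \<le> k"
  shows "\<exists>!e. e \<in> {pi / real k<..<pi / (real k - 1)} \<and> Phi k e = 0"
proof (cases "k = 4")
  case True
  then show ?thesis
    using Phi_4_unique_zero by simp
next
  case False
  with assms have "5 \<le> k"
    by simp
  then obtain e where e: "e \<in> {pi / real k<..<pi / (real k - 1)}" "Phi k e = 0"
    using Phi_has_zero by blast
  show ?thesis
  proof (rule ex1I)
    show "e \<in> {pi / real k<..<pi / (real k - 1)} \<and> Phi k e = 0"
      using e by blast
    show "e' = e" if "e' \<in> {pi / real k<..<pi / (real k - 1)} \<and> Phi k e' = 0" for e'
      using Phi_zero_unique[OF \<open>5 \<le> k\<close>] that e by blast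
  qed
qed

lemma eta_k_zero_of_Phi:
  assumes "4 \<le> k"
  shows "eta_k k \<in> {pi / real k<..<pi / (real k - 1)}" "Phi k (eta_k k) = 0"
  using theI'[OF Phi_unique_zero[OF assms]] by (simp_all add: eta_k_def)

lemma cos_pow4_gt_if_less_eta_k:
  assumes "4 \<le> k" "0 < e" "e < eta_k k"
  shows "1 / 8 < cos e ^ 4"
proof (cases "k = 4")
  case True
  have eta: "pi / 4 < eta_k 4" "eta_k 4 < pi / 3" "Phi 4 (eta_k 4) = 0"
    using eta_k_zero_of_Phi[of 4] by simp_all
  then have "cos (eta_k 4) ^ 4 = 1 / 8"
    using Phi_4_zero_iff by blast
  moreover have "cos (eta_k 4) < cos e"
    using assms(2,3) True eta(2) pi_gt_zero by (intro cos_monotone_0_pi) simp_all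
  moreover have "0 < cos (eta_k 4)"
    using eta(1,2) pi_gt_zero by (intro cos_gt_zero) linarith+
  ultimately show ?thesis
    using power_strict_mono[of "cos (eta_k 4)" "cos e" 4] by simp
next
  case False
  have "eta_k k < pi / (real k - 1)"
    using eta_k_zero_of_Phi(1)[OF assms(1)] by simp
  moreover have "pi / (real k - 1) \<le> pi / 4"
    using assms(1) False by (intro pi_div_antimono) auto
  ultimately have "e \<le> pi / 4"
    using assms(3) by linarith
  then have "1 / 2 \<le> (cos e)\<^sup>2"
    using assms(2) by (intro half_le_cos_sq) simp_all
  then have "(1 / 2)\<^sup>2 \<le> ((cos e)\<^sup>2)\<^sup>2"
    by (intro power_mono) auto
  then show ?thesis
    by (simp add: power_divide flip: power_mult)
qed

theorem lemma5p2:
  fixes k j :: nat and \<eta> :: real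
  assumes "k \<ge> 4"
    and "0 < \<eta>" and "\<eta> < pi / 3"
    and "eta_k (k + 1) \<le> \<eta>" and "\<eta> < eta_k k"
    and "j \<ge> k"
  shows "angle3 1 (zz \<eta> j) (w1 \<eta>) \<in> {0<..<pi}"
proof (rule angle3_1_zz_w1_in_0_pi)
  show "1 / 8 < cos \<eta> ^ 4"
    using cos_pow4_gt_if_less_eta_k[OF assms(1,2,5)] .
  show "\<eta> < pi / 2"
    using assms(3) pi_gt_zero by linarith
qed (use assms in simp_all)

end
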